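(* Let $f_\theta$ be a neural network parameterized by $\theta$, with $\theta_l$ the parameters of its $l$-th layer, and let $\mathrm{DB\text{-}MLP}^l$ be its $l$-th doubly biased MLP block with input $X^{l-1}$ and zeroth bias $D^l$. Then for any sample $(x,y)$, \[ \|\nabla_{\theta_l}\mathcal{L}_{\mathrm{CE}}(\theta,(x,y))\|_2^2\ \ge\ \|\nabla_{X^{l-1}}\mathcal{L}_{\mathrm{CE}}(\theta,(x,y))\|_2^2+\|H^l(X^{l-1}+D^l)^\top\|_2^2+\|G_V^l(A^l)^\top\|_2^2 . \] If the block is not doubly biased, the first term on the right-hand side disappears.
   Context: $\mathcal{L}_{\mathrm{CE}}(\theta,(x,y))=-\log f(y\mid\theta,x)$ is the Cross-Entropy loss. The DB-MLP block receives $X^{l-1}\in\mathbb{R}^{d\times k}$ (tokens as columns), has zeroth bias $D^l\in\mathbb{R}^{d\times k}$, key matrix $K^l\in\mathbb{R}^{n\times d}$, key bias $b_K^l$, value matrix $V^l\in\mathbb{R}^{d\times n}$, value bias $b_V^l$, computes $A^l=\sigma(K^l(X^{l-1}+D^l)+b_K^l\mathbf1^\top)$ and $Z^l=V^lA^l+b_V^l\mathbf1^\top$ (entrywise activation $\sigma$), and $X^{l-1}$ is used only through $X^{l-1}+D^l$ (the block's first operation). The parameters $\theta_l$ include at least $K^l,V^l,D^l$. $\Gamma^l=\sigma'(K^l(X^{l-1}+D^l)+b_K^l\mathbf1^\top)$ entrywise, $G_K^l=\partial\mathcal{L}_{\mathrm{CE}}/\partial A^l$, $G_V^l=\partial\mathcal{L}_{\mathrm{CE}}/\partial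 Z^l$, $H^l=G_K^l\odot\Gamma^l$ (Hadamard product). Matrix norms are Frobenius norms. *)

theory Defs
  imports "HOL-Analysis.Analysis"
begin

text \<open>Matrices: a d x k matrix is an element of real^'k^'d (rows indexed by 'd).
 The norm on real^'k^'d is the Frobenius norm; on products it is the Euclidean
 norm of the pair of norms, i.e. the norm of the concatenated parameter vector.\<close>

definition grad :: "('a::real_inner \<Rightarrow> real) \<Rightarrow> 'a \<Rightarrow> 'a" where
  "grad F x = (THE g. (F has_derivative (\<lambda>h. g \<bullet> h)) (at x))"

definition bcast :: "real^'m \<Rightarrow> real^'k^'m" where
  "bcast b = (\<chi> i j. b $ i)"

definition entrywise :: "(real \<Rightarrow> real) \<Rightarrow> real^'k^'m \<Rightarrow> real^'k^'m" where
  "entrywise \<sigma> M = (\<chi> i j. \<sigma> (M $ i $ j))"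

definition hadamard :: "real^'k^'m \<Rightarrow> real^'k^'m \<Rightarrow> real^'k^'m" where
  "hadamard A B = (\<chi> i j. A $ i $ j * B $ i $ j)"

definition preact :: "real^'d^'n \<Rightarrow> real^'n \<Rightarrow> real^'k^'d \<Rightarrow> real^'k^'d \<Rightarrow> real^'k^'n" where
  "preact K bK X D = K ** (X + D) + bcast bK"

definition blockA :: "(real \<Rightarrow> real) \<Rightarrow> real^'d^'n \<Rightarrow> real^'n \<Rightarrow> real^'k^'d \<Rightarrow> real^'k^'d \<Rightarrow> real^'k^'n" where
  "blockA \<sigma> K bK X D = entrywise \<sigma> (preact K bK X D)"

definition blockZ :: "(real \<Rightarrow> real) \<Rightarrow> real^'d^'n \<Rightarrow> real^'n \<Rightarrow> real^'n^'d \<Rightarrow> real^'d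
    \<Rightarrow> real^'k^'d \<Rightarrow> real^'k^'d \<Rightarrow> real^'k^'d" where
  "blockZ \<sigma> K bK V bV X D = V ** blockA \<sigma> K bK X D + bcast bV"

text \<open>Cross-entropy loss -log f(y | theta, x), where the probability f(y|theta,x) of the
 label depends on the layer-l block only through its output Z^l and on the remaining
 layer-l parameters psi; F (Z, psi) is that probability (all other network parameters,
 the input x and the label y are fixed and absorbed into F).\<close>
definition ceZ :: "((real^'k^'d) \<times> 'e \<Rightarrow> real) \<Rightarrow> real^'k^'d \<Rightarrow> 'e \<Rightarrow> real" where
  "ceZ F Z \<psi> = - ln (F (Z, \<psi>))"

text \<open>Loss as a function of the block input X^{l-1} and the layer parameters
 theta_l = (D, K, b_K, V, b_V, psi).\<close>
definition loss :: "(real \<Rightarrow> real) \<Rightarrow> ((real^'k^'d) \<times> 'e \<Rightarrow> real) \<Rightarrow> real^'k^'d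
   \<Rightarrow> (real^'k^'d) \<times> (real^'d^'n) \<times> (real^'n) \<times> (real^'n^'d) \<times> (real^'d) \<times> 'e \<Rightarrow> real" where
  "loss \<sigma> F X \<theta> = (case \<theta> of (D, K, bK, V, bV, \<psi>) \<Rightarrow> ceZ F (blockZ \<sigma> K bK V bV X D) \<psi>)"

end

theory Submission
  imports Defs
begin

text \<open>The parameter vector \<open>(D, K, b\<^sub>K, V, b\<^sub>V, \<psi>)\<close> is a product, so the squared norm
  of the full gradient is the sum of the squared norms of the partial gradients, and dropping
  the terms for \<open>b\<^sub>K\<close>, \<open>b\<^sub>V\<close> and \<open>\<psi>\<close> gives the inequality. The input \<open>X\<close> enters only through \<open>X + D\<close>,
  so the gradients in \<open>X\<close> and in \<open>D\<close> coincide. The derivative of \<open>K \<mapsto> A\<close> in direction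
  \<open>h\<close> is \<open>\<Gamma> \<odot> (h (X + D))\<close>, whose Frobenius adjoint is \<open>G \<mapsto> (G \<odot> \<Gamma>) (X + D)\<^sup>T\<close>;
  likewise the adjoint of \<open>h \<mapsto> h A\<close> is \<open>G \<mapsto> G A\<^sup>T\<close>. Without a zeroth bias the
  \<open>D\<close>-component, and with it the input-gradient term, is absent.\<close>

lemma grad_eqI:
  assumes "(f has_derivative (\<lambda>h. g \<bullet> h)) (at x)"
  shows "grad f x = g"
  unfolding grad_def
proof (rule the_equality)
  fix g' assume "(f has_derivative (\<lambda>h. g' \<bullet> h)) (at x)"
  from this assms have "(\<lambda>h. g' \<bullet> h) = (\<lambda>h. g \<bullet> h)" by (rule has_derivative_unique)
  then have "(g' - g) \<bullet> (g' - g) = 0" by (metis inner_diff_left right_minus_eq)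
  then show "g' = g" by simp
qed (rule assms)

lemma has_derivative_grad:
  fixes f :: "'a::euclidean_space \<Rightarrow> real"
  assumes "f differentiable (at x)"
  shows "(f has_derivative (\<lambda>h. grad f x \<bullet> h)) (at x)"
proof -
  obtain f' where f': "(f has_derivative f') (at x)"
    using assms unfolding differentiable_def by blast
  then have "linear f'" by (rule has_derivative_linear)
  then have f'_eq: "f' = (\<lambda>h. adjoint f' 1 \<bullet> h)"
    by (simp add: fun_eq_iff adjoint_works inner_commute)
  with f' have "grad f x = adjoint f' 1" by (metis grad_eqI)
  with f' f'_eq show ?thesis by simp
qed

lemma grad_chain:
  fixes f :: "'b::euclidean_space \<Rightarrow> real"
  assumes "f differentiable (at y)" and "(\<phi> has_derivative \<phi>') (at x)" and "\<phi> x = y"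
    and "\<And>h. grad f y \<bullet> \<phi>' h = g \<bullet> h"
  shows "grad (\<lambda>x. f (\<phi> x)) x = g"
  using has_derivative_compose[OF assms(2) has_derivative_grad[OF assms(1)[folded assms(3)]]]
  by (intro grad_eqI) (simp add: assms(3,4))

lemma differentiable_minus_ln:
  fixes f :: "'a::real_normed_vector \<Rightarrow> real"
  assumes "f differentiable (at x)" and "f x > 0"
  shows "(\<lambda>x. - ln (f x)) differentiable (at x)"
proof -
  obtain f' where "(f has_derivative f') (at x)"
    using assms(1) unfolding differentiable_def by blast
  from DERIV_compose_FDERIV[OF DERIV_ln this] assms(2)
  have "(\<lambda>x. ln (f x)) differentiable (at x)" by (auto simp: differentiable_def)
  then show ?thesis by (rule differentiable_minus)
qed

lemma power2_norm_Pair: "(norm (a, b))\<^sup>2 = (norm a)\<^sup>2 + (norm b)\<^sup>2"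
  by (simp add: norm_Pair)

lemma has_derivative_vecI:
  fixes f :: "'a::real_normed_vector \<Rightarrow> 'b::euclidean_space^'n"
  assumes "\<And>i. ((\<lambda>x. f x $ i) has_derivative (\<lambda>h. f' h $ i)) (at a within S)"
  shows "(f has_derivative f') (at a within S)"
proof (rule has_derivative_componentwise_within[THEN iffD2], rule ballI)
  fix v :: "'b^'n" assume "v \<in> Basis"
  then obtain i b where v: "v = axis i b" and "b \<in> Basis" by (auto simp: Basis_vec_def)
  have "((\<lambda>x. f x $ i \<bullet> b) has_derivative (\<lambda>x. f' x $ i \<bullet> b)) (at a within S)"
    by (rule bounded_linear.has_derivative[OF bounded_linear_inner_left assms])
  then show "((\<lambda>x. f x \<bullet> v) has_derivative (\<lambda>x. f' x \<bullet> v)) (at a within S)"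
    by (simp add: v inner_axis)
qed

lemma bounded_bilinear_matrix_matrix_mult:
  "bounded_bilinear ((**) :: real^'m^'n \<Rightarrow> real^'k^'m \<Rightarrow> real^'k^'n)"
proof -
  have "bilinear ((**) :: real^'m^'n \<Rightarrow> real^'k^'m \<Rightarrow> real^'k^'n)"
    unfolding bilinear_def
    by (auto intro!: linearI simp: matrix_matrix_mult_def vec_eq_iff algebra_simps
        sum.distrib sum_distrib_left)
  then show ?thesis by (simp add: bilinear_conv_bounded_bilinear)
qed

lemmas has_derivative_matrix_matrix_mult [derivative_intros] =
  bounded_bilinear.FDERIV[OF bounded_bilinear_matrix_matrix_mult]

lemma bounded_linear_bcast: "bounded_linear (bcast :: real^'m \<Rightarrow> real^'k^'m)"
  unfolding linear_conv_bounded_linear[symmetric]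
  by (rule linearI) (simp_all add: bcast_def vec_eq_iff)

lemmas has_derivative_bcast [derivative_intros] =
  bounded_linear.has_derivative[OF bounded_linear_bcast]

lemma has_derivative_entrywise_at:
  assumes "\<And>t. (\<sigma> has_real_derivative \<sigma>' t) (at t)"
  shows "(entrywise \<sigma> has_derivative hadamard (entrywise \<sigma>' M)) (at (M::real^'k^'n))"
proof (intro has_derivative_vecI)
  fix i j
  have "((\<lambda>x. x $ i $ j) has_derivative (\<lambda>h. h $ i $ j)) (at M)"
    by (intro bounded_linear.has_derivative[OF bounded_linear_vec_nth] has_derivative_ident)
  from DERIV_compose_FDERIV[OF assms this]
  show "((\<lambda>x. entrywise \<sigma> x $ i $ j) has_derivative
      (\<lambda>h. hadamard (entrywise \<sigma>' M) h $ i $ j)) (at M)"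
    by (simp add: entrywise_def hadamard_def mult.commute)
qed

lemma has_derivative_entrywise:
  assumes "\<And>t. (\<sigma> has_real_derivative \<sigma>' t) (at t)"
    and "(f has_derivative f') (at x within S)"
  shows "((\<lambda>x. entrywise \<sigma> (f x)) has_derivative
      (\<lambda>h. hadamard (entrywise \<sigma>' (f x)) (f' h))) (at x within S)"
  using has_derivative_compose[OF assms(2) has_derivative_entrywise_at[OF assms(1)]] .

lemma inner_hadamard: "(G::real^'k^'n) \<bullet> hadamard M H = hadamard G M \<bullet> H"
  by (simp add: inner_vec_def hadamard_def mult.assoc)

lemma inner_matrix_mult_right:
  "(G::real^'k^'n) \<bullet> (M ** (Y::real^'k^'d)) = (G ** transpose Y) \<bullet> M"
proof -
  have "G \<bullet> (M ** Y) = (\<Sum>i\<in>UNIV. \<Sum>j\<in>UNIV. \<Sum>l\<in>UNIV. G $ i $ j * (M $ i $ l * Y $ l $ j))"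
    by (simp add: inner_vec_def matrix_matrix_mult_def sum_distrib_left)
  also have "\<dots> = (\<Sum>i\<in>UNIV. \<Sum>l\<in>UNIV. \<Sum>j\<in>UNIV. G $ i $ j * (M $ i $ l * Y $ l $ j))"
    by (rule sum.cong[OF refl]) (rule sum.swap)
  also have "\<dots> = (G ** transpose Y) \<bullet> M"
    by (simp add: inner_vec_def matrix_matrix_mult_def transpose_def sum_distrib_left mult_ac)
  finally show ?thesis .
qed

context
  fixes \<sigma> \<sigma>' :: "real \<Rightarrow> real"
    and F :: "(real^'k^'d) \<times> 'e::euclidean_space \<Rightarrow> real"
    and X D :: "real^'k^'d" and K :: "real^'d^'n" and bK :: "real^'n"
    and V :: "real^'n^'d" and bV :: "real^'d" and \<psi> :: 'e
  assumes sigma_deriv: "\<And>t. (\<sigma> has_real_derivative \<sigma>' t) (at t)"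
    and F_diff: "F differentiable (at (blockZ \<sigma> K bK V bV X D, \<psi>))"
    and F_pos: "F (blockZ \<sigma> K bK V bV X D, \<psi>) > 0"
begin

lemma differentiable_ceZ: "(\<lambda>Z'. ceZ F Z' \<psi>) differentiable (at (blockZ \<sigma> K bK V bV X D))"
  unfolding ceZ_def
  using differentiable_compose[of "\<lambda>p. - ln (F p)" "\<lambda>Z'. (Z', \<psi>)"]
    differentiable_minus_ln[OF F_diff F_pos]
  by (simp add: differentiableI has_derivative_Pair has_derivative_ident)

lemma differentiable_ceZ_activation:
  "(\<lambda>A'. ceZ F (V ** A' + bcast bV) \<psi>) differentiable (at (blockA \<sigma> K bK X D))"
proof (rule differentiable_compose[of "\<lambda>Z'. ceZ F Z' \<psi>"])
  show "(\<lambda>Z'. ceZ F Z' \<psi>) differentiable (at (V ** blockA \<sigma> K bK X D + bcast bV))"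
    using differentiable_ceZ by (simp add: blockZ_def)
  show "(\<lambda>A'. V ** A' + bcast bV) differentiable (at (blockA \<sigma> K bK X D))"
    by (rule differentiableI, (rule derivative_intros)+)
qed

lemma differentiable_loss: "loss \<sigma> F X differentiable (at (D, K, bK, V, bV, \<psi>))"
proof -
  define Z\<psi> where
    "Z\<psi> = (\<lambda>(D', K' :: real^'d^'n, bK', V', bV', \<psi>' :: 'e). (blockZ \<sigma> K' bK' V' bV' X D', \<psi>'))"
  have "Z\<psi> differentiable (at (D, K, bK, V, bV, \<psi>))"
    unfolding Z\<psi>_def split_def blockZ_def blockA_def preact_def
    by (rule differentiableI, (rule derivative_intros has_derivative_entrywise[OF sigma_deriv])+)
  moreover have "(\<lambda>p. - ln (F p)) differentiable (at (Z\<psi> (D, K, bK, V, bV, \<psi>)))"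
    using differentiable_minus_ln[OF F_diff F_pos] by (simp add: Z\<psi>_def)
  ultimately have "(\<lambda>\<theta>. - ln (F (Z\<psi> \<theta>))) differentiable (at (D, K, bK, V, bV, \<psi>))"
    by (rule differentiable_compose[rotated])
  moreover have "loss \<sigma> F X = (\<lambda>\<theta>. - ln (F (Z\<psi> \<theta>)))"
    by (simp add: fun_eq_iff loss_def ceZ_def Z\<psi>_def split_def)
  ultimately show ?thesis by simp
qed

lemma grad_loss_input:
  "grad (\<lambda>X'. loss \<sigma> F X' (D, K, bK, V, bV, \<psi>)) X = fst (grad (loss \<sigma> F X) (D, K, bK, V, bV, \<psi>))"
proof -
  have "loss \<sigma> F X' (D, K, bK, V, bV, \<psi>) = loss \<sigma> F X (X' - X + D, K, bK, V, bV, \<psi>)" for X'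
    by (simp add: loss_def blockZ_def blockA_def preact_def)
  moreover have "grad (\<lambda>X'. loss \<sigma> F X (X' - X + D, K, bK, V, bV, \<psi>)) X
      = fst (grad (loss \<sigma> F X) (D, K, bK, V, bV, \<psi>))"
    by (rule grad_chain[OF differentiable_loss], (rule derivative_intros)+) (simp_all add: inner_Pair_0)
  ultimately show ?thesis by simp
qed

lemma grad_loss_key:
  "fst (snd (grad (loss \<sigma> F X) (D, K, bK, V, bV, \<psi>)))
    = hadamard (grad (\<lambda>A'. ceZ F (V ** A' + bcast bV) \<psi>) (blockA \<sigma> K bK X D))
        (entrywise \<sigma>' (preact K bK X D)) ** transpose (X + D)"
  (is "_ = hadamard ?G\<^sub>A ?\<Gamma> ** transpose (X + D)")
proof -
  let ?L = "\<lambda>K'. loss \<sigma> F X (D, K', bK, V, bV, \<psi>)"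
  have "grad ?L K = fst (snd (grad (loss \<sigma> F X) (D, K, bK, V, bV, \<psi>)))"
    by (rule grad_chain[OF differentiable_loss], (rule derivative_intros)+) (simp_all add: inner_Pair_0)
  moreover have "grad ?L K = hadamard ?G\<^sub>A ?\<Gamma> ** transpose (X + D)"
  proof -
    have "?L K' = ceZ F (V ** entrywise \<sigma> (K' ** (X + D) + bcast bK) + bcast bV) \<psi>" for K'
      by (simp add: loss_def blockZ_def blockA_def preact_def)
    moreover have "grad (\<lambda>K'. ceZ F (V ** entrywise \<sigma> (K' ** (X + D) + bcast bK) + bcast bV) \<psi>) K
        = hadamard ?G\<^sub>A ?\<Gamma> ** transpose (X + D)"
      by (rule grad_chain[OF differentiable_ceZ_activation],
          (rule derivative_intros has_derivative_entrywise[OF sigma_deriv])+)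
        (simp_all add: blockA_def preact_def inner_hadamard inner_matrix_mult_right)
    ultimately show ?thesis by simp
  qed
  ultimately show ?thesis by simp
qed

lemma grad_loss_value:
  "fst (snd (snd (snd (grad (loss \<sigma> F X) (D, K, bK, V, bV, \<psi>)))))
    = grad (\<lambda>Z'. ceZ F Z' \<psi>) (blockZ \<sigma> K bK V bV X D) ** transpose (blockA \<sigma> K bK X D)"
proof -
  let ?L = "\<lambda>V'. loss \<sigma> F X (D, K, bK, V', bV, \<psi>)"
  have "grad ?L V = fst (snd (snd (snd (grad (loss \<sigma> F X) (D, K, bK, V, bV, \<psi>)))))"
    by (rule grad_chain[OF differentiable_loss], (rule derivative_intros)+) (simp_all add: inner_Pair_0)
  moreover have "?L V' = ceZ F (V' ** blockA \<sigma> K bK X D + bcast bV) \<psi>" for V'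
    by (simp add: loss_def blockZ_def)
  moreover have "grad (\<lambda>V'. ceZ F (V' ** blockA \<sigma> K bK X D + bcast bV) \<psi>) V
      = grad (\<lambda>Z'. ceZ F Z' \<psi>) (blockZ \<sigma> K bK V bV X D) ** transpose (blockA \<sigma> K bK X D)"
    by (rule grad_chain[OF differentiable_ceZ], (rule derivative_intros)+)
      (simp_all add: blockZ_def inner_matrix_mult_right)
  ultimately show ?thesis by simp
qed

lemma grad_loss_fixed_zeroth_bias:
  "grad (\<lambda>\<theta>'. loss \<sigma> F X (D, \<theta>')) (K, bK, V, bV, \<psi>) = snd (grad (loss \<sigma> F X) (D, K, bK, V, bV, \<psi>))"
  by (rule grad_chain[OF differentiable_loss], (rule derivative_intros)+) (simp_all add: inner_Pair_0)

end

theorem mainTheorem8: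
  fixes \<sigma> \<sigma>' :: "real \<Rightarrow> real"
    and F :: "(real^'k^'d) \<times> 'e::euclidean_space \<Rightarrow> real"
    and X D :: "real^'k^'d" and K :: "real^'d^'n" and bK :: "real^'n"
    and V :: "real^'n^'d" and bV :: "real^'d" and \<psi> :: 'e
  assumes sigma_deriv: "\<And>t. (\<sigma> has_real_derivative \<sigma>' t) (at t)"
    and F_diff: "F differentiable (at (blockZ \<sigma> K bK V bV X D, \<psi>))"
    and F_pos: "F (blockZ \<sigma> K bK V bV X D, \<psi>) > 0"
  shows
   "(norm (grad (loss \<sigma> F X) (D, K, bK, V, bV, \<psi>)))\<^sup>2 \<ge>
       (norm (grad (\<lambda>X'. loss \<sigma> F X' (D, K, bK, V, bV, \<psi>)) X))\<^sup>2
     + (norm (hadamard (grad (\<lambda>A'. ceZ F (V ** A' + bcast bV) \<psi>) (blockA \<sigma> K bK X D))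
                       (entrywise \<sigma>' (preact K bK X D)) ** transpose (X + D)))\<^sup>2
     + (norm (grad (\<lambda>Z'. ceZ F Z' \<psi>) (blockZ \<sigma> K bK V bV X D)
               ** transpose (blockA \<sigma> K bK X D)))\<^sup>2
   \<and> (D = 0 \<longrightarrow>
       (norm (grad (\<lambda>(K', bK', V', bV', \<psi>'). loss \<sigma> F X (0, K', bK', V', bV', \<psi>'))
                   (K, bK, V, bV, \<psi>)))\<^sup>2 \<ge>
         (norm (hadamard (grad (\<lambda>A'. ceZ F (V ** A' + bcast bV) \<psi>) (blockA \<sigma> K bK X 0))
                       (entrywise \<sigma>' (preact K bK X 0)) ** transpose X))\<^sup>2
       + (norm (grad (\<lambda>Z'. ceZ F Z' \<psi>) (blockZ \<sigma> K bK V bV X 0)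
               ** transpose (blockA \<sigma> K bK X 0)))\<^sup>2)"
proof -
  let ?g = "grad (loss \<sigma> F X) (D, K, bK, V, bV, \<psi>)"
  obtain g\<^sub>D g\<^sub>K g\<^sub>b\<^sub>K g\<^sub>V g\<^sub>b\<^sub>V g\<^sub>\<psi> where g: "?g = (g\<^sub>D, g\<^sub>K, g\<^sub>b\<^sub>K, g\<^sub>V, g\<^sub>b\<^sub>V, g\<^sub>\<psi>)"
    by (cases ?g) auto
  have snd_norm_ge: "(norm (snd ?g))\<^sup>2 \<ge> (norm g\<^sub>K)\<^sup>2 + (norm g\<^sub>V)\<^sup>2"
    by (simp add: g power2_norm_Pair)
  have "(norm ?g)\<^sup>2 = (norm g\<^sub>D)\<^sup>2 + (norm (snd ?g))\<^sup>2"
    by (simp add: g power2_norm_Pair)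
  with snd_norm_ge have with_bias: "(norm ?g)\<^sup>2 \<ge> (norm g\<^sub>D)\<^sup>2 + (norm g\<^sub>K)\<^sup>2 + (norm g\<^sub>V)\<^sup>2"
    by simp
  have without_bias: "(norm (grad (\<lambda>(K', bK', V', bV', \<psi>'). loss \<sigma> F X (0, K', bK', V', bV', \<psi>'))
      (K, bK, V, bV, \<psi>)))\<^sup>2 = (norm (snd ?g))\<^sup>2" if "D = 0"
    using grad_loss_fixed_zeroth_bias[OF assms] that by (simp add: split_def)
  show ?thesis
    using with_bias snd_norm_ge without_bias g
      grad_loss_input[OF assms] grad_loss_key[OF assms] grad_loss_value[OF assms]
    by auto
qed

end
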